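(* Let $f_0,g_0:\mathbb{R}^n\to[-\infty,\infty]$ be proper, let $h:\mathbb{R}^m\to\mathbb{R}$ be Lipschitz continuous with modulus $\kappa:\mathbb{R}_+\to\mathbb{R}_+$, and let $f_i,g_i:\mathbb{R}^n\to\mathbb{R}$, $i=1,\dots,m$, be Lipschitz continuous with common modulus $\lambda:\mathbb{R}_+\to\mathbb{R}_+$. Set $F=(f_1,\dots,f_m)$, $G=(g_1,\dots,g_m)$, $f=f_0+h\circ F$ and $g=g_0+h\circ G$. Fix $\rho\in\mathbb{R}_+$ and let $\bar\rho\ge\rho+\max\{\sup_{x\in\mathbb{B}_2(0,\rho)}|h(F(x))|,\ \sup_{x\in\mathbb{B}_2(0,\rho)}|h(G(x))|\}$, $\hat\rho>\rho+\hat d_{\bar\rho}(\mathrm{epi}\,f_0,\mathrm{epi}\,g_0)$, and $\rho^*\ge\max\{\sup_{x\in\mathbb{B}_2(0,\hat\rho)}\|F(x)\|_2,\ \sup_{x\in\mathbb{B}_2(0,\hat\rho)}\|G(x)\|_2\}$. Then $$\hat d_\rho(\mathrm{epi}\,f,\mathrm{epi}\,g)\le\big(1+\sqrt m\,\kappa(\rho^* )\lambda(\hat\rho)\big)\,\hat d_{\bar\rho}(\mathrm{epi}\,f_0,\mathrm{epi}\,g_0)+\kappa(\rho^* )\sup_{x\in\mathbb{B}_2(0,\rho)}\|F(x)-G(x)\|_2,$$ where all truncated Hausdorff distances are taken in $\mathbb{R}^{n+1}$ with the norm $\|(x,\alpha)\|=\max\{\|x\|_2,|\alpha|\}$.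
   Context: A function is proper if it never takes the value $-\infty$ and is finite somewhere. $\mathrm{epi}\,f=\{(x,\alpha)\in\mathbb{R}^n\times\mathbb{R}\mid f(x)\le\alpha\}$. $\mathbb{B}_2(0,r)=\{x\mid\|x\|_2\le r\}$. A function $\psi:\mathbb{R}^k\to\mathbb{R}$ is Lipschitz continuous with modulus $\kappa:\mathbb{R}_+\to\mathbb{R}_+$ if $|\psi(u)-\psi(\bar u)|\le\kappa(r)\|u-\bar u\|_2$ for all $r\in\mathbb{R}_+$ and all $u,\bar u\in\mathbb{B}_2(0,r)$. For a norm $\|\cdot\|$ on a Euclidean space, $\mathrm{dist}(x,D)=\inf_{d\in D}\|x-d\|$ (with $\mathrm{dist}(x,\emptyset)=\infty$), $\mathbb{B}(0,r)$ is the closed $\|\cdot\|$-ball, and the excess of $C$ over $D$ is $\mathrm{exs}(C;D)=\sup_{x\in C}\mathrm{dist}(x,D)$ if $C,D\neq\emptyset$, $=\infty$ if $C\neq\emptyset=D$, and $=0$ if $C=\emptyset$. The truncated Hausdorff distance is $\hat d_r(C,D)=\max\{\mathrm{exs}(C\cap\mathbb{B}(0,r);D),\ \mathrm{exs}(D\cap\mathbb{B}(0,r);C)\}$. *)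

theory Defs
  imports "HOL-Analysis.Analysis" "HOL-Library.Extended_Real"
begin

definition proper_fun :: "('a \<Rightarrow> ereal) \<Rightarrow> bool" where
  "proper_fun f \<longleftrightarrow> (\<forall>x. f x \<noteq> -\<infinity>) \<and> (\<exists>x. f x \<noteq> \<infinity> \<and> f x \<noteq> -\<infinity>)"

definition epi :: "('a \<Rightarrow> ereal) \<Rightarrow> ('a \<times> real) set" where
  "epi f = {(x, \<alpha>). f x \<le> ereal \<alpha>}"

definition lipschitz_mod :: "('a::real_normed_vector \<Rightarrow> real) \<Rightarrow> (real \<Rightarrow> real) \<Rightarrow> bool" where
  "lipschitz_mod \<psi> \<kappa> \<longleftrightarrow>
     (\<forall>r\<ge>0. \<forall>u\<in>cball 0 r. \<forall>v\<in>cball 0 r. \<bar>\<psi> u - \<psi> v\<bar> \<le> \<kappa> r * norm (u - v))"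

definition mnorm :: "('a::real_normed_vector \<times> real) \<Rightarrow> real" where
  "mnorm p = max (norm (fst p)) \<bar>snd p\<bar>"

definition mball :: "real \<Rightarrow> ('a::real_normed_vector \<times> real) set" where
  "mball r = {p. mnorm p \<le> r}"

definition mdist_set :: "('a::real_normed_vector \<times> real) \<Rightarrow> ('a \<times> real) set \<Rightarrow> ereal" where
  "mdist_set p D = (INF d\<in>D. ereal (mnorm (p - d)))"

definition exs :: "('a::real_normed_vector \<times> real) set \<Rightarrow> ('a \<times> real) set \<Rightarrow> ereal" where
  "exs C D = (if C = {} then 0 else (SUP p\<in>C. mdist_set p D))"

definition trunc_haus :: "real \<Rightarrow> ('a::real_normed_vector \<times> real) set \<Rightarrow> ('a \<times> real) set \<Rightarrow> ereal" where
  "trunc_haus r C D = max (exs (C \<inter> mball r) D) (exs (D \<inter> mball r) C)"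

end

theory Submission
  imports Defs
begin

text \<open>
  Given a point \<open>(x, \<alpha>)\<close> of \<open>epi f\<close> near the origin, the point \<open>(x, \<alpha> - h (F x))\<close> lies in
  \<open>epi f\<^sub>0\<close> within the larger ball of radius \<open>\<rho>bar\<close>, so it has a close neighbour \<open>(y, \<beta>)\<close> in
  \<open>epi g\<^sub>0\<close>, and then \<open>(y, \<beta> + h (G y))\<close> lies in \<open>epi g\<close>. Its distance from \<open>(x, \<alpha>)\<close> is
  controlled by the Lipschitz constants of \<open>h\<close> and \<open>G\<close>: the radius \<open>\<rho>hat\<close> confines \<open>y\<close>, and
  \<open>\<rho>star\<close> confines \<open>F x\<close> and \<open>G y\<close>. Exchanging the roles of \<open>f\<close> and \<open>g\<close> bounds the other excess.
\<close>

lemma norm_le_sqrt_card_mult: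
  fixes v :: "real^'m"
  assumes "\<And>i. \<bar>v $ i\<bar> \<le> c"
  shows "norm v \<le> sqrt (real CARD('m)) * c"
proof -
  have c0: "c \<ge> 0" using assms[of undefined] by linarith
  have "norm v = sqrt (\<Sum>i\<in>UNIV. (v $ i)\<^sup>2)" by (simp add: norm_vec_def L2_set_def)
  also have "\<dots> \<le> sqrt (\<Sum>i\<in>(UNIV::'m set). c\<^sup>2)"
    using assms c0 by (intro real_sqrt_le_mono sum_mono) (metis abs_le_square_iff abs_of_nonneg)
  also have "\<dots> = sqrt (real CARD('m)) * c" using c0 by (simp add: real_sqrt_mult)
  finally show ?thesis .
qed

lemma lipschitz_mod_vec_norm:
  fixes G :: "'a::real_normed_vector \<Rightarrow> real^'m"
  assumes "\<forall>i. lipschitz_mod (\<lambda>x. G x $ i) lam" and "r \<ge> 0"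
    and "norm x \<le> r" and "norm y \<le> r"
  shows "norm (G x - G y) \<le> sqrt (real CARD('m)) * (lam r * norm (x - y))"
  using assms by (intro norm_le_sqrt_card_mult) (auto simp: lipschitz_mod_def)

lemma mem_epi_add_iff: "(x, \<alpha>) \<in> epi (\<lambda>x. f x + ereal (c x)) \<longleftrightarrow> (x, \<alpha> - c x) \<in> epi f"
  by (cases "f x") (auto simp: epi_def)

lemma mnorm_nonneg: "0 \<le> mnorm p"
  by (simp add: mnorm_def le_max_iff_disj)

lemma mdist_set_le_exs: "p \<in> C \<Longrightarrow> mdist_set p D \<le> exs C D"
  unfolding exs_def by (auto intro: SUP_upper)

lemma exs_nonneg: "0 \<le> exs C D"
proof (cases "C = {}")
  case False
  then obtain p where "p \<in> C" by blast
  have "0 \<le> mdist_set p D"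
    unfolding mdist_set_def by (rule INF_greatest) (simp add: mnorm_nonneg)
  also have "\<dots> \<le> exs C D" using \<open>p \<in> C\<close> by (rule mdist_set_le_exs)
  finally show ?thesis .
qed (simp add: exs_def)

lemma exs_leI: "(\<And>p. p \<in> C \<Longrightarrow> mdist_set p D \<le> B) \<Longrightarrow> 0 \<le> B \<Longrightarrow> exs C D \<le> B"
  unfolding exs_def by (auto intro: SUP_least)

lemma mdist_set_less_ereal_obtain:
  assumes "mdist_set p D < ereal r"
  obtains y \<beta> where "(y, \<beta>) \<in> D" and "mnorm (p - (y, \<beta>)) < r"
  using assms unfolding mdist_set_def by (auto simp: INF_less_iff)

lemma composite_shift_mnorm_le:
  fixes h :: "real^'m \<Rightarrow> real" and F G :: "'a::real_normed_vector \<Rightarrow> real^'m"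
  assumes lh: "lipschitz_mod h \<kappa>" and lG: "\<forall>i. lipschitz_mod (\<lambda>x. G x $ i) lam"
    and r: "r \<ge> 0" "norm x \<le> r" "norm y \<le> r"
    and s: "s \<ge> 0" "norm (F x) \<le> s" "norm (G y) \<le> s"
    and k0: "\<kappa> s \<ge> 0" and l0: "lam r \<ge> 0"
  shows "mnorm ((x, \<alpha> + h (F x)) - (y, \<beta> + h (G y)))
           \<le> (1 + sqrt (real CARD('m)) * \<kappa> s * lam r) * mnorm ((x, \<alpha>) - (y, \<beta>))
             + \<kappa> s * norm (F x - G x)"
proof -
  define \<delta> where "\<delta> = mnorm ((x, \<alpha>) - (y, \<beta>))"
  define c where "c = sqrt (real CARD('m)) * \<kappa> s * lam r"
  have c0: "c \<ge> 0" unfolding c_def using k0 l0 by simp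
  have xy: "norm (x - y) \<le> \<delta>" and ab: "\<bar>\<alpha> - \<beta>\<bar> \<le> \<delta>"
    unfolding \<delta>_def by (auto simp: mnorm_def)
  have "\<bar>h (F x) - h (G y)\<bar> \<le> \<kappa> s * norm (F x - G y)"
    using lh s unfolding lipschitz_mod_def by simp
  also have "\<dots> \<le> \<kappa> s * (norm (F x - G x) + norm (G x - G y))"
    using k0 norm_triangle_ineq[of "F x - G x" "G x - G y"] by (intro mult_left_mono) auto
  also have "\<dots> \<le> \<kappa> s * norm (F x - G x) + c * norm (x - y)"
    using mult_left_mono[OF lipschitz_mod_vec_norm[OF lG r] k0]
    by (simp add: c_def distrib_left mult_ac)
  also have "\<dots> \<le> \<kappa> s * norm (F x - G x) + c * \<delta>"
    using xy c0 by (simp add: mult_left_mono)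
  finally have hd: "\<bar>h (F x) - h (G y)\<bar> \<le> \<kappa> s * norm (F x - G x) + c * \<delta>" .
  have "0 \<le> \<delta>" using xy norm_ge_zero order_trans by blast
  then have "\<kappa> s * norm (F x - G x) \<ge> 0" "c * \<delta> \<ge> 0" using k0 c0 by simp_all
  then show ?thesis
    using hd xy ab unfolding \<delta>_def[symmetric] c_def[symmetric]
    by (simp add: mnorm_def algebra_simps)
qed

lemma exs_less_ereal_obtain:
  assumes "exs C D \<le> ereal d" and "p \<in> C" and "\<epsilon> > 0"
  obtains y \<beta> where "(y, \<beta>) \<in> D" and "mnorm (p - (y, \<beta>)) < d + \<epsilon>"
proof -
  have "mdist_set p D \<le> ereal d" using mdist_set_le_exs[OF assms(2)] assms(1) by (rule order_trans)
  also have "\<dots> < ereal (d + \<epsilon>)" using assms(3) by simp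
  finally show ?thesis using mdist_set_less_ereal_obtain that by blast
qed

lemma mdist_set_epi_add_le:
  assumes "(y, \<beta>) \<in> epi g"
  shows "mdist_set p (epi (\<lambda>x. g x + ereal (c x))) \<le> ereal (mnorm (p - (y, \<beta> + c y)))"
  unfolding mdist_set_def using assms by (intro INF_lower2[of "(y, \<beta> + c y)"]) (simp_all add: mem_epi_add_iff)

lemma mdist_set_epi_composite_le:
  fixes f0 g0 :: "'a::real_normed_vector \<Rightarrow> ereal"
    and h :: "real^'m \<Rightarrow> real" and F G :: "'a \<Rightarrow> real^'m"
  assumes lh: "lipschitz_mod h \<kappa>" and lG: "\<forall>i. lipschitz_mod (\<lambda>x. G x $ i) lam"
    and \<kappa>0: "\<kappa> \<rho>star \<ge> 0" and lam0: "lam \<rho>hat \<ge> 0"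
    and p: "(x, \<alpha>) \<in> epi (\<lambda>x. f0 x + ereal (h (F x))) \<inter> mball \<rho>"
    and \<rho>bar: "\<rho> + \<bar>h (F x)\<bar> \<le> \<rho>bar"
    and d: "exs (epi f0 \<inter> mball \<rho>bar) (epi g0) \<le> ereal d" and \<rho>hat: "\<rho> + d < \<rho>hat"
    and \<rho>star: "\<And>z. norm z \<le> \<rho>hat \<Longrightarrow> norm (F z) \<le> \<rho>star \<and> norm (G z) \<le> \<rho>star"
  shows "mdist_set (x, \<alpha>) (epi (\<lambda>x. g0 x + ereal (h (G x))))
           \<le> ereal ((1 + sqrt (real CARD('m)) * \<kappa> \<rho>star * lam \<rho>hat) * d
                    + \<kappa> \<rho>star * norm (F x - G x))"
proof (rule ereal_le_epsilon2)
  fix e :: real assume e: "e > 0"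
  define K where "K = 1 + sqrt (real CARD('m)) * \<kappa> \<rho>star * lam \<rho>hat"
  have K1: "K \<ge> 1" unfolding K_def using \<kappa>0 lam0 by simp
  have "0 \<le> ereal d" using exs_nonneg d by (rule order_trans)
  then have d0: "d \<ge> 0" by simp
  have x: "norm x \<le> \<rho>" and \<alpha>: "\<bar>\<alpha>\<bar> \<le> \<rho>" and fx: "(x, \<alpha> - h (F x)) \<in> epi f0"
    using p mem_epi_add_iff[of x \<alpha> f0] by (auto simp: mball_def mnorm_def)
  have \<rho>hat0: "\<rho>hat \<ge> 0" and x': "norm x \<le> \<rho>hat"
    using x \<rho>hat d0 norm_ge_zero[of x] by linarith+
  have "norm (F 0) \<le> \<rho>star" using \<rho>star[of 0] \<rho>hat0 by simp
  then have \<rho>star0: "\<rho>star \<ge> 0" using norm_ge_zero order_trans by blast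
  have "(x, \<alpha> - h (F x)) \<in> epi f0 \<inter> mball \<rho>bar"
    using fx x \<alpha> \<rho>bar by (auto simp: mball_def mnorm_def)
  \<comment> \<open>the slack must also keep the neighbour \<open>y\<close> inside the ball of radius \<open>\<rho>hat\<close>\<close>
  moreover define \<epsilon> where "\<epsilon> = min (e / K) ((\<rho>hat - \<rho> - d) / 2)"
  moreover have "\<epsilon> > 0" unfolding \<epsilon>_def using e K1 \<rho>hat by simp
  ultimately obtain y \<beta> where q: "(y, \<beta>) \<in> epi g0"
    and qd: "mnorm ((x, \<alpha> - h (F x)) - (y, \<beta>)) < d + \<epsilon>"
    using d exs_less_ereal_obtain by blast
  have "norm y \<le> norm x + norm (x - y)"
    using norm_triangle_ineq2[of y x] by (simp add: norm_minus_commute)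
  moreover have "norm (x - y) < d + \<epsilon>" using qd by (simp add: mnorm_def)
  moreover have "\<epsilon> \<le> (\<rho>hat - \<rho> - d) / 2" unfolding \<epsilon>_def by (rule min.cobounded2)
  ultimately have y: "norm y \<le> \<rho>hat" using x \<rho>hat by argo
  have "mdist_set (x, \<alpha>) (epi (\<lambda>x. g0 x + ereal (h (G x))))
          \<le> ereal (mnorm ((x, \<alpha> - h (F x) + h (F x)) - (y, \<beta> + h (G y))))"
    using mdist_set_epi_add_le[OF q, of "(x, \<alpha>)" "\<lambda>x. h (G x)"] by simp
  also have "\<dots> \<le> ereal (K * mnorm ((x, \<alpha> - h (F x)) - (y, \<beta>)) + \<kappa> \<rho>star * norm (F x - G x))"
    using composite_shift_mnorm_le[where F=F and G=G and \<alpha>="\<alpha> - h (F x)" and \<beta>=\<beta>,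
        OF lh lG \<rho>hat0 x' y \<rho>star0 conjunct1[OF \<rho>star[OF x']] conjunct2[OF \<rho>star[OF y]] \<kappa>0 lam0]
    unfolding K_def by simp
  also have "\<dots> \<le> ereal (K * (d + \<epsilon>) + \<kappa> \<rho>star * norm (F x - G x))"
    using qd K1 by simp
  also have "\<dots> \<le> ereal (K * d + \<kappa> \<rho>star * norm (F x - G x)) + ereal e"
    using K1 unfolding \<epsilon>_def by (simp add: distrib_left min_def field_simps)
  finally show "mdist_set (x, \<alpha>) (epi (\<lambda>x. g0 x + ereal (h (G x))))
                  \<le> ereal (K * d + \<kappa> \<rho>star * norm (F x - G x)) + ereal e"
    unfolding K_def .
qed

lemma exs_epi_composite_le:
  fixes f0 g0 :: "'a::real_normed_vector \<Rightarrow> ereal"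
    and h :: "real^'m \<Rightarrow> real" and F G :: "'a \<Rightarrow> real^'m"
  assumes k0: "\<forall>r\<ge>0. \<kappa> r \<ge> 0" and lh: "lipschitz_mod h \<kappa>"
    and l0: "\<forall>r\<ge>0. lam r \<ge> 0" and lG: "\<forall>i. lipschitz_mod (\<lambda>x. G x $ i) lam"
    and \<rho>0: "\<rho> \<ge> 0" and \<rho>bar: "ereal \<rho> + (SUP x\<in>cball 0 \<rho>. ereal \<bar>h (F x)\<bar>) \<le> ereal \<rho>bar"
    and d: "exs (epi f0 \<inter> mball \<rho>bar) (epi g0) \<le> ereal d" and \<rho>hat: "\<rho> + d < \<rho>hat"
    and \<rho>star: "(SUP x\<in>cball 0 \<rho>hat. ereal (norm (F x))) \<le> ereal \<rho>star"
      "(SUP x\<in>cball 0 \<rho>hat. ereal (norm (G x))) \<le> ereal \<rho>star"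
  shows "exs (epi (\<lambda>x. f0 x + ereal (h (F x))) \<inter> mball \<rho>) (epi (\<lambda>x. g0 x + ereal (h (G x))))
           \<le> ereal ((1 + sqrt (real CARD('m)) * \<kappa> \<rho>star * lam \<rho>hat) * d)
             + ereal (\<kappa> \<rho>star) * (SUP x\<in>cball 0 \<rho>. ereal (norm (F x - G x)))"
proof -
  define \<eta> where "\<eta> = (SUP x\<in>cball 0 \<rho>. ereal (norm (F x - G x)))"
  have "0 \<le> ereal d" using exs_nonneg d by (rule order_trans)
  then have d0: "d \<ge> 0" by simp
  then have \<rho>hat0: "\<rho>hat \<ge> 0" using \<rho>0 \<rho>hat by simp
  have FG: "norm (F x) \<le> \<rho>star \<and> norm (G x) \<le> \<rho>star" if "norm x \<le> \<rho>hat" for x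
    using \<rho>star that by (simp add: SUP_le_iff)
  have "norm (F 0) \<le> \<rho>star" using FG[of 0] \<rho>hat0 by simp
  then have \<kappa>0: "\<kappa> \<rho>star \<ge> 0" using k0 norm_ge_zero order_trans by blast
  have lam0: "lam \<rho>hat \<ge> 0" using l0 \<rho>hat0 by simp
  have "ereal (norm (F 0 - G 0)) \<le> \<eta>" unfolding \<eta>_def using \<rho>0 by (intro SUP_upper) simp
  then have \<eta>0: "0 \<le> \<eta>" by (rule order_trans[rotated]) simp
  have "mdist_set p (epi (\<lambda>x. g0 x + ereal (h (G x))))
          \<le> ereal ((1 + sqrt (real CARD('m)) * \<kappa> \<rho>star * lam \<rho>hat) * d) + ereal (\<kappa> \<rho>star) * \<eta>"
    if p: "p \<in> epi (\<lambda>x. f0 x + ereal (h (F x))) \<inter> mball \<rho>" for p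
  proof -
    obtain x \<alpha> where px: "p = (x, \<alpha>)" by fastforce
    have x: "x \<in> cball 0 \<rho>" using p px by (simp add: mball_def mnorm_def)
    have "ereal \<rho> + ereal \<bar>h (F x)\<bar> \<le> ereal \<rho>bar"
      using x by (intro order_trans[OF add_left_mono \<rho>bar]) (rule SUP_upper)
    then have "mdist_set p (epi (\<lambda>x. g0 x + ereal (h (G x))))
                 \<le> ereal ((1 + sqrt (real CARD('m)) * \<kappa> \<rho>star * lam \<rho>hat) * d)
                   + ereal (\<kappa> \<rho>star) * ereal (norm (F x - G x))"
      using mdist_set_epi_composite_le[OF lh lG \<kappa>0 lam0, of x \<alpha> f0 F \<rho> \<rho>bar g0 d] p px d \<rho>hat FG
      by simp
    also have "\<dots> \<le> ereal ((1 + sqrt (real CARD('m)) * \<kappa> \<rho>star * lam \<rho>hat) * d) + ereal (\<kappa> \<rho>star) * \<eta>"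
      unfolding \<eta>_def using x \<kappa>0 by (intro add_left_mono ereal_mult_left_mono SUP_upper) auto
    finally show ?thesis .
  qed
  then show ?thesis
    unfolding \<eta>_def[symmetric] using d0 \<kappa>0 lam0 \<eta>0
    by (intro exs_leI add_nonneg_nonneg) simp_all
qed

theorem mainTheorem14:
  fixes f0 g0 :: "real^'n \<Rightarrow> ereal"
    and h :: "real^'m \<Rightarrow> real"
    and F G :: "real^'n \<Rightarrow> real^'m"
    and \<kappa> lam :: "real \<Rightarrow> real"
    and \<rho> \<rho>bar \<rho>hat \<rho>star :: real
  assumes "proper_fun f0" and "proper_fun g0"
    and "\<forall>r\<ge>0. \<kappa> r \<ge> 0" and "lipschitz_mod h \<kappa>"
    and "\<forall>r\<ge>0. lam r \<ge> 0"
    and "\<forall>i. lipschitz_mod (\<lambda>x. F x $ i) lam"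
    and "\<forall>i. lipschitz_mod (\<lambda>x. G x $ i) lam"
    and "\<rho> \<ge> 0"
    and "ereal \<rho>bar \<ge> ereal \<rho> + max (SUP x\<in>cball 0 \<rho>. ereal \<bar>h (F x)\<bar>)
                                        (SUP x\<in>cball 0 \<rho>. ereal \<bar>h (G x)\<bar>)"
    and "ereal \<rho>hat > ereal \<rho> + trunc_haus \<rho>bar (epi f0) (epi g0)"
    and "ereal \<rho>star \<ge> max (SUP x\<in>cball 0 \<rho>hat. ereal (norm (F x)))
                              (SUP x\<in>cball 0 \<rho>hat. ereal (norm (G x)))"
  shows "trunc_haus \<rho> (epi (\<lambda>x. f0 x + ereal (h (F x)))) (epi (\<lambda>x. g0 x + ereal (h (G x))))
           \<le> ereal (1 + sqrt (real CARD('m)) * \<kappa> \<rho>star * lam \<rho>hat) * trunc_haus \<rho>bar (epi f0) (epi g0)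
             + ereal (\<kappa> \<rho>star) * (SUP x\<in>cball 0 \<rho>. ereal (norm (F x - G x)))"
proof -
  define D where "D = trunc_haus \<rho>bar (epi f0) (epi g0)"
  have "0 \<le> D" unfolding D_def trunc_haus_def by (simp add: exs_nonneg le_max_iff_disj)
  moreover have "D \<noteq> \<infinity>" using assms(10) unfolding D_def[symmetric] by auto
  ultimately obtain d where d: "D = ereal d" by (cases D) auto
  have exs_fg: "exs (epi f0 \<inter> mball \<rho>bar) (epi g0) \<le> ereal d"
    and exs_gf: "exs (epi g0 \<inter> mball \<rho>bar) (epi f0) \<le> ereal d"
    using d unfolding D_def trunc_haus_def by (metis max.cobounded1 max.cobounded2)+
  have \<rho>hat: "\<rho> + d < \<rho>hat" using assms(10) unfolding D_def[symmetric] d by simp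
  have \<rho>bar: "ereal \<rho> + (SUP x\<in>cball 0 \<rho>. ereal \<bar>h (F x)\<bar>) \<le> ereal \<rho>bar"
    "ereal \<rho> + (SUP x\<in>cball 0 \<rho>. ereal \<bar>h (G x)\<bar>) \<le> ereal \<rho>bar"
    by (rule order_trans[OF add_left_mono assms(9)], simp)+
  have \<rho>star: "(SUP x\<in>cball 0 \<rho>hat. ereal (norm (F x))) \<le> ereal \<rho>star"
    "(SUP x\<in>cball 0 \<rho>hat. ereal (norm (G x))) \<le> ereal \<rho>star"
    using assms(11) by simp_all
  note fg = exs_epi_composite_le[OF assms(3,4,5,7,8) \<rho>bar(1) exs_fg \<rho>hat \<rho>star]
  note gf = exs_epi_composite_le[OF assms(3,4,5,6,8) \<rho>bar(2) exs_gf \<rho>hat \<rho>star(2,1)]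
  show ?thesis
    using fg gf unfolding D_def[symmetric] d unfolding trunc_haus_def
    by (simp add: norm_minus_commute)
qed

end
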